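(* Let $K$ be a field of characteristic zero, let $G$ be a subgroup of the additive group of $K$, and let $W_G$ be the Lie algebra with basis $\{e_\alpha : \alpha \in G\}$ and bracket $[e_\alpha, e_\beta] = (\beta-\alpha)e_{\alpha+\beta}$. Then: (a) there is no decomposition of $W_G$ as a direct sum of vector spaces $W_G = A \oplus B$ with $A, B \neq 0$, $[[A,A],B] = 0$ and $[[B,B],A] = 0$; and (b) there are no nonzero subspaces $A \subseteq B$ of $W_G$ with $\dim A + \dim B = \dim W_G$, $[[A,A],B] = 0$ and $[[B,B],A] = 0$. *)

theory Defs
  imports Complex_Main "HOL-Library.Equipollence" "HOL-Library.Function_Algebras"
begin

text \<open>The Witt-type algebra W_G is realised as the finitely supported functions
  with support in G; e_alpha is the indicator of alpha.\<close>

definition fscale :: "'k::field \<Rightarrow> ('k \<Rightarrow> 'k) \<Rightarrow> ('k \<Rightarrow> 'k)" where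
  "fscale c f = (\<lambda>x. c * f x)"

definition fsupp :: "('k::field \<Rightarrow> 'k) \<Rightarrow> 'k set" where
  "fsupp f = {x. f x \<noteq> 0}"

definition add_subgroup :: "'k::field set \<Rightarrow> bool" where
  "add_subgroup G \<longleftrightarrow> 0 \<in> G \<and> (\<forall>x\<in>G. \<forall>y\<in>G. x + y \<in> G) \<and> (\<forall>x\<in>G. - x \<in> G)"

definition WG :: "'k::field set \<Rightarrow> ('k \<Rightarrow> 'k) set" where
  "WG G = {f. finite (fsupp f) \<and> fsupp f \<subseteq> G}"

text \<open>Bilinear extension of [e_a, e_b] = (b - a) e_(a+b).\<close>
definition wbr :: "('k::field \<Rightarrow> 'k) \<Rightarrow> ('k \<Rightarrow> 'k) \<Rightarrow> ('k \<Rightarrow> 'k)" where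
  "wbr x y = (\<lambda>g. \<Sum>(a, b) \<in> {(a, b). a \<in> fsupp x \<and> b \<in> fsupp y \<and> a + b = g}.
                   (b - a) * x a * y b)"

abbreviation fspan :: "('k::field \<Rightarrow> 'k) set \<Rightarrow> ('k \<Rightarrow> 'k) set" where
  "fspan \<equiv> module.span fscale"

abbreviation fsubspace :: "('k::field \<Rightarrow> 'k) set \<Rightarrow> bool" where
  "fsubspace \<equiv> module.subspace fscale"

abbreviation findependent :: "('k::field \<Rightarrow> 'k) set \<Rightarrow> bool" where
  "findependent \<equiv> module.independent fscale"

definition brk :: "('k::field \<Rightarrow> 'k) set \<Rightarrow> ('k \<Rightarrow> 'k) set \<Rightarrow> ('k \<Rightarrow> 'k) set" where
  "brk A B = fspan {wbr a b | a b. a \<in> A \<and> b \<in> B}"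

definition is_basis_of :: "('k::field \<Rightarrow> 'k) set \<Rightarrow> ('k \<Rightarrow> 'k) set \<Rightarrow> bool" where
  "is_basis_of S V \<longleftrightarrow> S \<subseteq> V \<and> findependent S \<and> fspan S = V"

end

theory Submission
  imports Defs "HOL-Library.Indicator_Function"
begin

text \<open>
  The key fact is that the centralizer of a nonzero \<open>x \<in> W\<^sub>G\<close> is the line \<open>K x\<close>.
  Take an additive map \<open>\<phi> : K \<rightarrow> \<rat>\<close> that is injective on the finite support of \<open>x\<close>
  (a generic \<open>\<rat>\<close>-linear form does this, as \<open>K\<close> has characteristic zero). If \<open>\<alpha>\<close> and
  \<open>\<beta>\<close> are the \<open>\<phi>\<close>-largest points of the supports of \<open>x\<close> and \<open>y\<close>, then the coefficient
  of \<open>e\<^sub>\<alpha>\<^sub>+\<^sub>\<beta>\<close> in \<open>[x, y]\<close> is \<open>(\<beta> - \<alpha>) x\<^sub>\<alpha> y\<^sub>\<beta>\<close>. So if \<open>[x, y] = 0\<close>, subtracting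
  \<open>(y\<^sub>\<alpha> / x\<^sub>\<alpha>) x\<close> from \<open>y\<close> leaves an element commuting with \<open>x\<close> whose leading point is
  not \<open>\<alpha>\<close>, hence the zero element.

  If \<open>[[A, A], b] = 0\<close> with \<open>b \<noteq> 0\<close>, all brackets of elements of \<open>A\<close> therefore lie on \<open>K b\<close>.
  For independent \<open>x, y, z \<in> A\<close> with \<open>[x, y] = c\<^sub>1 b\<close> and \<open>[x, z] = c\<^sub>2 b\<close>, the element
  \<open>c\<^sub>2 y - c\<^sub>1 z\<close> commutes with \<open>x\<close>, a contradiction; so \<open>dim A \<le> 2\<close>. Both parts now follow
  by counting dimensions: \<open>W\<^sub>G\<close> is infinite-dimensional if \<open>G \<noteq> 0\<close>, since a nonzero
  subgroup of a field of characteristic zero is infinite, and \<open>W\<^sub>0\<close> is one-dimensional.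
\<close>

interpretation fvs: vector_space "fscale :: 'k::field \<Rightarrow> ('k \<Rightarrow> 'k) \<Rightarrow> ('k \<Rightarrow> 'k)"
  by unfold_locales (auto simp: fscale_def fun_eq_iff algebra_simps)

lemma wbr_eq_sum:
  assumes "finite F" "fsupp x \<subseteq> F"
  shows "wbr x y g = (\<Sum>a\<in>F. (g - a - a) * x a * y (g - a))"
proof -
  let ?Q = "{a \<in> fsupp x. g - a \<in> fsupp y}"
  have pairs: "{(a, b). a \<in> fsupp x \<and> b \<in> fsupp y \<and> a + b = g} = (\<lambda>a. (a, g - a)) ` ?Q"
    by (auto simp: image_iff eq_diff_eq')
  have inj: "inj_on (\<lambda>a. (a, g - a)) ?Q" by (auto simp: inj_on_def)
  have "wbr x y g = (\<Sum>a\<in>?Q. (g - a - a) * x a * y (g - a))"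
    unfolding wbr_def pairs sum.reindex[OF inj] by (simp add: o_def)
  also have "\<dots> = (\<Sum>a\<in>F. (g - a - a) * x a * y (g - a))"
    using assms by (intro sum.mono_neutral_left) (auto simp: fsupp_def)
  finally show ?thesis .
qed

lemma wbr_swap: "wbr y x = - wbr x y"
proof
  fix g
  have "wbr y x g = (\<Sum>(a, b) \<in> {(a, b). a \<in> fsupp x \<and> b \<in> fsupp y \<and> a + b = g}. (a - b) * y b * x a)"
    unfolding wbr_def
    by (rule sum.reindex_bij_witness[where i = prod.swap and j = prod.swap]) (auto simp: add.commute)
  also have "\<dots> = - wbr x y g"
    unfolding wbr_def sum_negf[symmetric] by (intro sum.cong) (auto simp: algebra_simps)
  finally show "wbr y x g = (- wbr x y) g" by simp
qed

lemma wbr_self: "wbr x x = (0 :: 'k::field_char_0 \<Rightarrow> 'k)"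
  using wbr_swap[of x x] by (simp add: fun_eq_iff)

lemma wbr_add_right: "finite (fsupp x) \<Longrightarrow> wbr x (y + z) = wbr x y + wbr x z"
  by (simp add: fun_eq_iff wbr_eq_sum[OF _ order_refl] distrib_left sum.distrib)

lemma wbr_fscale_right: "finite (fsupp x) \<Longrightarrow> wbr x (fscale c y) = fscale c (wbr x y)"
  by (simp add: fun_eq_iff fscale_def wbr_eq_sum[OF _ order_refl] sum_distrib_left algebra_simps)

lemma finite_fsupp_wbr:
  assumes "finite (fsupp x)" "finite (fsupp y)"
  shows "finite (fsupp (wbr x y))"
proof -
  have "fsupp (wbr x y) \<subseteq> (\<lambda>(a, b). a + b) ` (fsupp x \<times> fsupp y)"
  proof
    fix g assume "g \<in> fsupp (wbr x y)"
    then have "wbr x y g \<noteq> 0" by (simp add: fsupp_def)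
    then have "{(a, b). a \<in> fsupp x \<and> b \<in> fsupp y \<and> a + b = g} \<noteq> {}"
      unfolding wbr_def by (intro notI) simp
    then show "g \<in> (\<lambda>(a, b). a + b) ` (fsupp x \<times> fsupp y)" by force
  qed
  then show ?thesis using assms finite_subset by blast
qed

lemma ex_additive_rat_nonzero:
  fixes d :: "'k::field_char_0"
  assumes "d \<noteq> 0"
  shows "\<exists>\<psi>::'k \<Rightarrow> rat. additive \<psi> \<and> \<psi> d \<noteq> 0"
proof -
  interpret vector_space_pair "\<lambda>q x. of_rat q * x :: 'k" "(*) :: rat \<Rightarrow> rat \<Rightarrow> rat"
    by unfold_locales (auto simp: of_rat_add of_rat_mult algebra_simps)
  have "vs1.independent {d}" using assms by simp
  then obtain \<psi> where lin: "Vector_Spaces.linear (\<lambda>q x. of_rat q * x :: 'k) (*) \<psi>" and "\<psi> d = 1"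
    using linear_independent_extend[of "{d}" "\<lambda>_. 1"] by auto
  from lin have "additive \<psi>" by (simp add: additive_def linear_add)
  with \<open>\<psi> d = 1\<close> show ?thesis by auto
qed

lemma ex_additive_rat_nonzero_on:
  fixes D :: "'k::field_char_0 set"
  assumes "finite D" "0 \<notin> D"
  shows "\<exists>\<phi>::'k \<Rightarrow> rat. additive \<phi> \<and> (\<forall>d\<in>D. \<phi> d \<noteq> 0)"
  using assms
proof (induction D rule: finite_induct)
  case empty
  have "additive (\<lambda>_::'k. 0::rat)" by (simp add: additive_def)
  then show ?case by blast
next
  case (insert d D)
  obtain \<phi> :: "'k \<Rightarrow> rat" where \<phi>: "additive \<phi>" "\<forall>e\<in>D. \<phi> e \<noteq> 0" using insert by auto
  obtain \<psi> :: "'k \<Rightarrow> rat" where \<psi>: "additive \<psi>" "\<psi> d \<noteq> 0"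
    using ex_additive_rat_nonzero[of d] insert.prems by auto
  obtain s :: rat where s: "s \<notin> (\<lambda>e. - \<phi> e / \<psi> e) ` insert d D"
    using ex_new_if_finite[OF infinite_UNIV_char_0, of "(\<lambda>e. - \<phi> e / \<psi> e) ` insert d D"]
      insert.hyps(1) by blast
  have "additive (\<lambda>x. \<phi> x + s * \<psi> x)"
    using \<phi>(1) \<psi>(1) by (simp add: additive_def algebra_simps)
  moreover have "\<phi> e + s * \<psi> e \<noteq> 0" if "e \<in> insert d D" for e
  proof (cases "\<psi> e = 0")
    case True
    then show ?thesis using that \<phi>(2) \<psi>(2) by auto
  next
    case False
    show ?thesis
    proof
      assume "\<phi> e + s * \<psi> e = 0"
      then have "s = - \<phi> e / \<psi> e" using False by (simp add: field_simps)
      then show False using s that by blast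
    qed
  qed
  ultimately show ?case by (intro exI[of _ "\<lambda>x. \<phi> x + s * \<psi> x"]) blast
qed

lemma ex_additive_rat_inj_on:
  fixes F :: "'k::field_char_0 set"
  assumes "finite F"
  shows "\<exists>\<phi>::'k \<Rightarrow> rat. additive \<phi> \<and> inj_on \<phi> F"
proof -
  let ?D = "(\<lambda>(u, v). u - v) ` (F \<times> F) - {0}"
  obtain \<phi> :: "'k \<Rightarrow> rat" where \<phi>: "additive \<phi>" "\<forall>d\<in>?D. \<phi> d \<noteq> 0"
    using ex_additive_rat_nonzero_on[of ?D] assms by auto
  have "inj_on \<phi> F"
  proof (rule inj_onI, rule ccontr)
    fix u v assume uv: "u \<in> F" "v \<in> F" "\<phi> u = \<phi> v" "u \<noteq> v"
    then have "\<phi> (u - v) \<noteq> 0" using \<phi>(2) by force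
    moreover have "\<phi> (u - v) = \<phi> u - \<phi> v" using \<phi>(1) by (rule additive.diff)
    ultimately show False using uv(3) by simp
  qed
  then show ?thesis using \<phi>(1) by blast
qed

lemma obtain_max_on_finite:
  fixes f :: "'a \<Rightarrow> 'b::linorder"
  assumes "finite S" "S \<noteq> {}"
  obtains m where "m \<in> S" "\<And>a. a \<in> S \<Longrightarrow> f a \<le> f m"
proof -
  have "Max (f ` S) \<in> f ` S" using assms by simp
  then obtain m where "m \<in> S" "f m = Max (f ` S)" by auto
  then show thesis using that[of m] Max_ge[of "f ` S"] assms by auto
qed

lemma wbr_leading_coeff:
  fixes x y :: "'k::field \<Rightarrow> 'k" and \<phi> :: "'k \<Rightarrow> 'g::linordered_ab_group_add"
  assumes fin: "finite (fsupp x)" and add: "additive \<phi>" and inj: "inj_on \<phi> (fsupp x)"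
    and \<alpha>: "\<alpha> \<in> fsupp x" "\<And>a. a \<in> fsupp x \<Longrightarrow> \<phi> a \<le> \<phi> \<alpha>"
    and \<beta>: "\<And>b. b \<in> fsupp y \<Longrightarrow> \<phi> b \<le> \<phi> \<beta>"
  shows "wbr x y (\<alpha> + \<beta>) = (\<beta> - \<alpha>) * x \<alpha> * y \<beta>"
proof -
  let ?t = "\<lambda>a. (\<alpha> + \<beta> - a - a) * x a * y (\<alpha> + \<beta> - a)"
  have vanish: "?t a = 0" if a: "a \<in> fsupp x - {\<alpha>}" for a
  proof (rule ccontr)
    assume "?t a \<noteq> 0"
    then have "\<phi> (\<alpha> + \<beta> - a) \<le> \<phi> \<beta>" using \<beta> by (simp add: fsupp_def)
    moreover have "\<phi> (\<alpha> + \<beta> - a) = \<phi> \<alpha> + \<phi> \<beta> - \<phi> a"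
      using add by (simp add: additive.add additive.diff)
    ultimately have "\<phi> a = \<phi> \<alpha>" using \<alpha>(2) a by force
    then show False using inj_onD[OF inj _ _ \<alpha>(1)] a by blast
  qed
  have "wbr x y (\<alpha> + \<beta>) = (\<Sum>a\<in>fsupp x. ?t a)" by (rule wbr_eq_sum[OF fin order_refl])
  also have "\<dots> = ?t \<alpha> + (\<Sum>a\<in>fsupp x - {\<alpha>}. ?t a)" by (rule sum.remove[OF fin \<alpha>(1)])
  also have "(\<Sum>a\<in>fsupp x - {\<alpha>}. ?t a) = 0" using vanish by (intro sum.neutral) blast
  finally show ?thesis by simp
qed

lemma wbr_eq_0_imp_multiple:
  fixes x y :: "'k::field_char_0 \<Rightarrow> 'k"
  assumes fx: "finite (fsupp x)" and fy: "finite (fsupp y)" and "x \<noteq> 0" and "wbr x y = 0"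
  shows "\<exists>c. y = fscale c x"
proof -
  obtain \<phi> :: "'k \<Rightarrow> rat" where \<phi>: "additive \<phi>" "inj_on \<phi> (fsupp x)"
    using ex_additive_rat_inj_on[OF fx] by blast
  have "fsupp x \<noteq> {}" using \<open>x \<noteq> 0\<close> by (auto simp: fsupp_def)
  then obtain \<alpha> where \<alpha>: "\<alpha> \<in> fsupp x" "\<And>a. a \<in> fsupp x \<Longrightarrow> \<phi> a \<le> \<phi> \<alpha>"
    using obtain_max_on_finite[OF fx] by metis
  define c where "c = y \<alpha> / x \<alpha>"
  define z where "z = y + fscale (- c) x"
  have z\<alpha>: "z \<alpha> = 0" using \<alpha>(1) by (simp add: z_def c_def fscale_def fsupp_def)
  have wz: "wbr x z = 0"
    unfolding z_def wbr_add_right[OF fx] wbr_fscale_right[OF fx] wbr_self \<open>wbr x y = 0\<close> by simp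
  have "z = 0"
  proof (rule ccontr)
    assume "z \<noteq> 0"
    have "fsupp z \<subseteq> fsupp x \<union> fsupp y" by (auto simp: z_def fsupp_def fscale_def)
    then have "finite (fsupp z)" using fx fy finite_subset by blast
    moreover have "fsupp z \<noteq> {}" using \<open>z \<noteq> 0\<close> by (auto simp: fsupp_def)
    ultimately obtain \<beta> where \<beta>: "\<beta> \<in> fsupp z" "\<And>b. b \<in> fsupp z \<Longrightarrow> \<phi> b \<le> \<phi> \<beta>"
      using obtain_max_on_finite by metis
    have "wbr x z (\<alpha> + \<beta>) = (\<beta> - \<alpha>) * x \<alpha> * z \<beta>"
      by (rule wbr_leading_coeff[OF fx \<phi> \<alpha> \<beta>(2)])
    moreover have "\<beta> \<noteq> \<alpha>" using \<beta>(1) z\<alpha> by (auto simp: fsupp_def)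
    ultimately show False using \<alpha>(1) \<beta>(1) wz by (simp add: fsupp_def)
  qed
  then have "y = fscale c x" by (simp add: z_def fscale_def fun_eq_iff add_eq_0_iff2)
  then show ?thesis by blast
qed

lemma WG_finite_fsupp: "f \<in> WG G \<Longrightarrow> finite (fsupp f)"
  by (simp add: WG_def)

lemma fsubspace_WG: "fsubspace (WG G)"
proof -
  have "0 \<in> WG G" by (simp add: WG_def fsupp_def)
  moreover have "x + y \<in> WG G" if "x \<in> WG G" "y \<in> WG G" for x y
  proof -
    have "fsupp (x + y) \<subseteq> fsupp x \<union> fsupp y" by (auto simp: fsupp_def)
    then show ?thesis using that unfolding WG_def by (auto intro: finite_subset)
  qed
  moreover have "fscale c x \<in> WG G" if "x \<in> WG G" for c x
  proof -
    have "fsupp (fscale c x) \<subseteq> fsupp x" by (auto simp: fsupp_def fscale_def)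
    then show ?thesis using that unfolding WG_def by (auto intro: finite_subset)
  qed
  ultimately show ?thesis unfolding fvs.subspace_def by blast
qed

lemma finite_card_le_2_if_no_three_distinct:
  assumes "\<And>x y z. \<lbrakk>x \<in> A; y \<in> A; z \<in> A; x \<noteq> y; x \<noteq> z; y \<noteq> z\<rbrakk> \<Longrightarrow> False"
  shows "finite A \<and> card A \<le> 2"
proof (rule ccontr)
  assume "\<not> (finite A \<and> card A \<le> 2)"
  then obtain T where T: "T \<subseteq> A" "card T = 3"
  proof (cases "finite A")
    case True
    then show ?thesis using that obtain_subset_with_card_n[of 3 A] \<open>\<not> (finite A \<and> card A \<le> 2)\<close>
      by force
  next
    case False
    then show ?thesis using that infinite_arbitrarily_large by blast
  qed
  then obtain x y z where "T = {x, y, z}" "x \<noteq> y" "y \<noteq> z" "x \<noteq> z"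
    by (auto simp: card_3_iff)
  then show False using assms[of x y z] T(1) by auto
qed

lemma independent_card_le_2_if_wbr_collinear:
  fixes b :: "'k::field_char_0 \<Rightarrow> 'k"
  assumes S: "S \<subseteq> WG G"
    and line: "\<And>x y. x \<in> S \<Longrightarrow> y \<in> S \<Longrightarrow> \<exists>c. wbr x y = fscale c b"
    and I: "I \<subseteq> S" "findependent I"
  shows "finite I \<and> card I \<le> 2"
proof -
  have not_in_span: "v \<notin> fspan (I - {v})" if "v \<in> I" for v
    using I(2) that fvs.dependent_def by blast
  have False if xyz: "x \<in> I" "y \<in> I" "z \<in> I" "x \<noteq> y" "x \<noteq> z" "y \<noteq> z" for x y z
  proof -
    have W: "x \<in> WG G" "y \<in> WG G" "z \<in> WG G" using xyz I(1) S by auto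
    have "x \<noteq> 0" using I(2) xyz(1) fvs.dependent_zero by blast
    have fin: "finite (fsupp x)" "finite (fsupp y)" "finite (fsupp z)"
      using W by (simp_all add: WG_finite_fsupp)
    have "x \<in> S" "y \<in> S" "z \<in> S" using xyz I(1) by auto
    then obtain c1 c2 where c1: "wbr x y = fscale c1 b" and c2: "wbr x z = fscale c2 b"
      using line by meson
    have "c1 \<noteq> 0"
    proof
      assume "c1 = 0"
      then have "wbr x y = 0" using c1 by simp
      then obtain c where "y = fscale c x"
        using wbr_eq_0_imp_multiple[OF fin(1,2) \<open>x \<noteq> 0\<close>] by blast
      then have "y \<in> fspan (I - {y})" using xyz by (simp add: fvs.span_scale fvs.span_base)
      then show False using not_in_span xyz(2) by blast
    qed
    let ?w = "fscale c2 y + fscale (- c1) z"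
    have "?w \<in> WG G"
      by (intro fvs.subspace_add[OF fsubspace_WG] fvs.subspace_scale[OF fsubspace_WG] W(2,3))
    moreover have "wbr x ?w = 0"
      unfolding wbr_add_right[OF fin(1)] wbr_fscale_right[OF fin(1)] c1 c2
      by (simp add: fscale_def fun_eq_iff)
    ultimately obtain c where w: "?w = fscale c x"
      using wbr_eq_0_imp_multiple[OF fin(1) _ \<open>x \<noteq> 0\<close>] WG_finite_fsupp by blast
    have "z = fscale (c2 / c1) y - fscale (c / c1) x"
    proof
      fix g
      have "c2 * y g - c1 * z g = c * x g" using fun_cong[OF w, of g] by (simp add: fscale_def)
      then show "z g = (fscale (c2 / c1) y - fscale (c / c1) x) g"
        using \<open>c1 \<noteq> 0\<close> by (simp add: fscale_def field_simps)
    qed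
    then have "z \<in> fspan (I - {z})"
      using xyz by (simp add: fvs.span_diff fvs.span_scale fvs.span_base)
    then show False using not_in_span xyz(3) by blast
  qed
  then show ?thesis by (rule finite_card_le_2_if_no_three_distinct)
qed

lemma brk_brk_eq_0_imp_wbr_wbr_eq_0:
  assumes "brk (brk A A) B = {0}" "x \<in> A" "y \<in> A" "b \<in> B"
  shows "wbr (wbr x y) b = 0"
proof -
  have "wbr x y \<in> brk A A" unfolding brk_def using assms by (intro fvs.span_base) blast
  then have "wbr (wbr x y) b \<in> brk (brk A A) B"
    unfolding brk_def using assms by (intro fvs.span_base) blast
  then show ?thesis using assms by simp
qed

lemma independent_card_le_2_if_brk_brk_eq_0:
  fixes t :: "'k::field_char_0 \<Rightarrow> 'k"
  assumes "brk (brk S S) T = {0}" "S \<subseteq> WG G" "t \<in> T" "t \<in> WG G" "t \<noteq> 0"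
    and "I \<subseteq> S" "findependent I"
  shows "finite I \<and> card I \<le> 2"
proof (rule independent_card_le_2_if_wbr_collinear[where b = t])
  fix x y assume "x \<in> S" "y \<in> S"
  then have "wbr t (wbr x y) = 0"
    using brk_brk_eq_0_imp_wbr_wbr_eq_0[OF assms(1) _ _ assms(3)] wbr_swap[of t] by simp
  moreover have "finite (fsupp (wbr x y))"
    using \<open>x \<in> S\<close> \<open>y \<in> S\<close> assms(2) by (blast intro: finite_fsupp_wbr WG_finite_fsupp)
  ultimately show "\<exists>c. wbr x y = fscale c t"
    using wbr_eq_0_imp_multiple WG_finite_fsupp assms(4,5) by blast
qed (use assms in auto)

lemma independent_indicators:
  fixes S :: "'k::field set"
  shows "findependent ((\<lambda>\<alpha>. indicator {\<alpha>}) ` S :: ('k \<Rightarrow> 'k) set)"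
proof
  assume "fvs.dependent ((\<lambda>\<alpha>. indicator {\<alpha>}) ` S :: ('k \<Rightarrow> 'k) set)"
  then obtain \<alpha> where \<alpha>: "indicator {\<alpha>} \<in> fspan ((\<lambda>\<alpha>. indicator {\<alpha>}) ` S - {indicator {\<alpha>}})"
    unfolding fvs.dependent_def by blast
  have "fspan ((\<lambda>\<beta>. indicator {\<beta>}) ` S - {indicator {\<alpha>}}) \<subseteq> {f :: 'k \<Rightarrow> 'k. f \<alpha> = 0}"
    by (rule fvs.span_minimal) (auto simp: fvs.subspace_def fscale_def indicator_def)
  then show False using \<alpha> by (auto simp: indicator_def)
qed

lemma add_subgroup_infinite:
  fixes G :: "'k::field_char_0 set"
  assumes G: "add_subgroup G" and g: "g \<in> G" "g \<noteq> 0"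
  shows "infinite G"
proof -
  have "of_nat n * g \<in> G" for n :: nat
  proof (induction n)
    case 0
    then show ?case using G by (simp add: add_subgroup_def)
  next
    case (Suc n)
    then have "of_nat n * g + g \<in> G" using G g by (simp add: add_subgroup_def)
    then show ?case by (simp add: algebra_simps)
  qed
  then have "range (\<lambda>n::nat. of_nat n * g) \<subseteq> G" by blast
  moreover have "inj (\<lambda>n::nat. of_nat n * g)" using g by (auto simp: inj_on_def)
  ultimately show ?thesis using infinite_super range_inj_infinite by blast
qed

lemma WG_subset_finite_span_imp_trivial:
  fixes G :: "'k::field_char_0 set"
  assumes "add_subgroup G" "finite S" "WG G \<subseteq> fspan S"
  shows "G = {0}"
proof -
  have "(\<lambda>\<alpha>. indicator {\<alpha>}) ` G \<subseteq> WG G" by (auto simp: WG_def fsupp_def indicator_def)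
  then have "finite ((\<lambda>\<alpha>. indicator {\<alpha>}) ` G :: ('k \<Rightarrow> 'k) set)"
    using fvs.independent_span_bound[OF assms(2) independent_indicators] assms(3) by blast
  moreover have "inj (\<lambda>\<alpha>. indicator {\<alpha>} :: 'k \<Rightarrow> 'k)" by (auto simp: inj_on_def indicator_def fun_eq_iff)
  ultimately have "finite G" using finite_imageD inj_on_subset by blast
  then show ?thesis using add_subgroup_infinite assms(1) by (auto simp: add_subgroup_def)
qed

lemma WG_zero_subset_span_singleton:
  fixes x :: "'k::field \<Rightarrow> 'k"
  assumes "x \<in> WG {0}" "x \<noteq> 0"
  shows "WG {0} \<subseteq> fspan {x}"
proof
  fix y :: "'k \<Rightarrow> 'k" assume "y \<in> WG {0}"
  have "x 0 \<noteq> 0" using assms by (auto simp: WG_def fsupp_def fun_eq_iff)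
  have "y = fscale (y 0 / x 0) x"
  proof
    fix t
    show "y t = fscale (y 0 / x 0) x t"
    proof (cases "t = 0")
      case True
      then show ?thesis using \<open>x 0 \<noteq> 0\<close> by (simp add: fscale_def)
    next
      case False
      then have "x t = 0" "y t = 0" using assms(1) \<open>y \<in> WG {0}\<close> by (auto simp: WG_def fsupp_def)
      then show ?thesis by (simp add: fscale_def)
    qed
  qed
  then show "y \<in> fspan {x}" by (simp add: fvs.span_singleton)
qed

lemma WG_no_double_bracket_direct_sum:
  fixes G :: "'k::field_char_0 set"
  assumes G: "add_subgroup G"
    and sA: "fsubspace A" and sB: "fsubspace B" and AW: "A \<subseteq> WG G" and BW: "B \<subseteq> WG G"
    and direct: "A \<inter> B = {0}" and sum: "{a + b | a b. a \<in> A \<and> b \<in> B} = WG G"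
    and "A \<noteq> {0}" "B \<noteq> {0}"
    and AAB: "brk (brk A A) B = {0}" and BBA: "brk (brk B B) A = {0}"
  shows False
proof -
  obtain a where a: "a \<in> A" "a \<noteq> 0" using sA \<open>A \<noteq> {0}\<close> fvs.subspace_0 by blast
  obtain b where b: "b \<in> B" "b \<noteq> 0" using sB \<open>B \<noteq> {0}\<close> fvs.subspace_0 by blast
  have aW: "a \<in> WG G" and bW: "b \<in> WG G" using a(1) b(1) AW BW by auto
  obtain BA where BA: "BA \<subseteq> A" "findependent BA" "A \<subseteq> fspan BA"
    by (rule fvs.maximal_independent_subset)
  obtain BB where BB: "BB \<subseteq> B" "findependent BB" "B \<subseteq> fspan BB"
    by (rule fvs.maximal_independent_subset)
  have "finite BA" using independent_card_le_2_if_brk_brk_eq_0[OF AAB AW b(1) bW b(2) BA(1,2)] ..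
  moreover have "finite BB" using independent_card_le_2_if_brk_brk_eq_0[OF BBA BW a(1) aW a(2) BB(1,2)] ..
  moreover have "WG G \<subseteq> fspan (BA \<union> BB)"
  proof
    fix f assume "f \<in> WG G"
    then obtain x y where "f = x + y" "x \<in> A" "y \<in> B" using sum by blast
    moreover have "fspan BA \<subseteq> fspan (BA \<union> BB)" "fspan BB \<subseteq> fspan (BA \<union> BB)"
      by (simp_all add: fvs.span_mono)
    ultimately show "f \<in> fspan (BA \<union> BB)" using BA(3) BB(3) by (blast intro: fvs.span_add)
  qed
  ultimately have "G = {0}" by (intro WG_subset_finite_span_imp_trivial[OF G]) simp_all
  then have "b \<in> fspan {a}" using WG_zero_subset_span_singleton[of a] a(2) aW bW by blast
  also have "fspan {a} \<subseteq> A" using a(1) sA by (simp add: fvs.span_minimal)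
  finally show False using b direct by blast
qed

lemma WG_no_double_bracket_nested_pair:
  fixes G :: "'k::field_char_0 set"
  assumes G: "add_subgroup G" and AB: "A \<subseteq> B" and BW: "B \<subseteq> WG G" and "A \<noteq> {0}"
    and A_basis: "is_basis_of BA A" and B_basis: "is_basis_of BB B"
    and W_basis: "is_basis_of BW (WG G)" and card: "BA <+> BB \<approx> BW"
    and BBA: "brk (brk B B) A = {0}"
  shows False
proof -
  note BA = A_basis[unfolded is_basis_of_def] and BB = B_basis[unfolded is_basis_of_def]
    and W = W_basis[unfolded is_basis_of_def]
  have "0 \<in> A" using BA fvs.span_zero by blast
  then obtain a where a: "a \<in> A" "a \<noteq> 0" using \<open>A \<noteq> {0}\<close> by blast
  have aW: "a \<in> WG G" using a(1) AB BW by blast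
  have "finite BB" using independent_card_le_2_if_brk_brk_eq_0[OF BBA BW a(1) aW a(2)] BB by blast
  moreover have "BA \<subseteq> fspan BB" using BA BB AB by blast
  ultimately have "finite BA" using fvs.independent_span_bound BA by blast
  have "finite BW" using eqpoll_finite_iff[OF card] \<open>finite BA\<close> \<open>finite BB\<close> by simp
  have card_BW: "card BW = card BA + card BB"
    using card \<open>finite BA\<close> \<open>finite BB\<close> \<open>finite BW\<close>
    by (simp add: eqpoll_iff_card card_Plus)
  have "G = {0}" using WG_subset_finite_span_imp_trivial[OF G \<open>finite BW\<close>] W by blast
  then have "BW \<subseteq> fspan {a}" using WG_zero_subset_span_singleton[of a] a(2) aW W by blast
  then have "card BW \<le> 1" using fvs.independent_span_bound[of "{a}" BW] W by simp
  have "BA \<noteq> {}" "BB \<noteq> {}" using BA BB \<open>0 \<in> A\<close> \<open>A \<noteq> {0}\<close> AB by auto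
  then have "card BA > 0" "card BB > 0" using \<open>finite BA\<close> \<open>finite BB\<close> by (simp_all add: card_gt_0_iff)
  with card_BW \<open>card BW \<le> 1\<close> show False by linarith
qed

theorem proposition3p2:
  fixes G :: "'k::field_char_0 set"
  assumes "add_subgroup G"
  shows "(\<not> (\<exists>A B. fsubspace A \<and> fsubspace B \<and> A \<subseteq> WG G \<and> B \<subseteq> WG G
              \<and> A \<inter> B = {0} \<and> {a + b | a b. a \<in> A \<and> b \<in> B} = WG G
              \<and> A \<noteq> {0} \<and> B \<noteq> {0}
              \<and> brk (brk A A) B = {0} \<and> brk (brk B B) A = {0}))
       \<and> \<not> (\<exists>A B. fsubspace A \<and> fsubspace B \<and> A \<subseteq> B \<and> B \<subseteq> WG G
              \<and> A \<noteq> {0} \<and> B \<noteq> {0}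
              \<and> (\<exists>BA BB BW. is_basis_of BA A \<and> is_basis_of BB B \<and> is_basis_of BW (WG G)
                   \<and> BA <+> BB \<approx> BW)
              \<and> brk (brk A A) B = {0} \<and> brk (brk B B) A = {0})"
proof (intro conjI notI; elim exE conjE)
  fix A B
  assume "fsubspace A" "fsubspace B" "A \<subseteq> WG G" "B \<subseteq> WG G" "A \<inter> B = {0}"
    "{a + b | a b. a \<in> A \<and> b \<in> B} = WG G" "A \<noteq> {0}" "B \<noteq> {0}"
    "brk (brk A A) B = {0}" "brk (brk B B) A = {0}"
  then show False by (rule WG_no_double_bracket_direct_sum[OF assms])
next
  fix A B BA BB BW
  assume "A \<subseteq> B" "B \<subseteq> WG G" "A \<noteq> {0}" "is_basis_of BA A" "is_basis_of BB B"
    "is_basis_of BW (WG G)" "BA <+> BB \<approx> BW" "brk (brk B B) A = {0}"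
  then show False by (rule WG_no_double_bracket_nested_pair[OF assms])
qed

end
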